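(* Let $X$ be a non-empty finite set and $\boldsymbol{\nu}$ a random probability measure on $X$ such that $(\boldsymbol{\nu}(x))_{x\in X}$ is exchangeable. Then for every $A\subset X$, $$\mathrm{Var}(\boldsymbol{\nu}(A))\le\frac{|A|}{|X|}\,\mathbb{E}\Big[\max_{x\in X}\boldsymbol{\nu}(x)\Big].$$
   Context: Exchangeable means the law of the collection is invariant under permutations of $X$. *)

theory Defs
  imports "HOL-Probability.Probability"
begin

definition random_prob_measure :: "'m measure \<Rightarrow> 'a set \<Rightarrow> ('m \<Rightarrow> 'a \<Rightarrow> real) \<Rightarrow> bool" where
  "random_prob_measure M X nu \<longleftrightarrow>
     (\<forall>x\<in>X. (\<lambda>w. nu w x) \<in> borel_measurable M) \<and>
     (\<forall>w\<in>space M. (\<forall>x\<in>X. 0 \<le> nu w x) \<and> (\<Sum>x\<in>X. nu w x) = 1)"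

definition exchangeable :: "'m measure \<Rightarrow> 'a set \<Rightarrow> ('m \<Rightarrow> 'a \<Rightarrow> real) \<Rightarrow> bool" where
  "exchangeable M X nu \<longleftrightarrow>
     (\<forall>\<sigma>. \<sigma> permutes X \<longrightarrow>
        distr M (PiM X (\<lambda>_. borel)) (\<lambda>w. \<lambda>x\<in>X. nu w (\<sigma> x))
        = distr M (PiM X (\<lambda>_. borel)) (\<lambda>w. \<lambda>x\<in>X. nu w x))"

end

theory Submission
  imports Defs
begin

text \<open>Since \<open>\<nu>(X) = 1\<close> is deterministic, the covariances \<open>Cov(\<nu>(x), \<nu>(y))\<close> summed over
  all \<open>x, y \<in> X\<close> give zero; by exchangeability the off-diagonal ones are all equal, so they
  are non-positive. Hence \<open>Var(\<nu>(A))\<close> is at most the sum of \<open>Var(\<nu>(x)) \<le> E[\<nu>(x)\<^sup>2]\<close> over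
  \<open>x \<in> A\<close>, which by exchangeability is \<open>|A|/|X|\<close> times the sum of \<open>E[\<nu>(x)\<^sup>2]\<close> over \<open>x \<in> X\<close>.
  Finally \<open>\<Sum>\<^sub>x \<nu>(x)\<^sup>2 \<le> max\<^sub>x \<nu>(x) \<cdot> \<Sum>\<^sub>x \<nu>(x) = max\<^sub>x \<nu>(x)\<close>.\<close>

definition (in prob_space) covariance :: "('a \<Rightarrow> real) \<Rightarrow> ('a \<Rightarrow> real) \<Rightarrow> real" where
  "covariance f g = expectation (\<lambda>w. (f w - expectation f) * (g w - expectation g))"

lemma (in prob_space) covariance_self: "covariance f f = variance f"
  by (simp add: covariance_def power2_eq_square)

lemma (in prob_space) covariance_eq:
  assumes "integrable M f" "integrable M g" "integrable M (\<lambda>w. f w * g w)"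
  shows "covariance f g = expectation (\<lambda>w. f w * g w) - expectation f * expectation g"
  using assms by (simp add: covariance_def algebra_simps prob_space)

lemma (in prob_space) variance_le_second_moment:
  fixes f :: "'a \<Rightarrow> real"
  assumes "integrable M f" "integrable M (\<lambda>w. (f w)\<^sup>2)"
  shows "variance f \<le> expectation (\<lambda>w. (f w)\<^sup>2)"
  using assms by (simp add: variance_eq)

lemma (in prob_space) variance_sum:
  fixes f :: "'i \<Rightarrow> 'a \<Rightarrow> real"
  assumes "finite I"
    and int: "\<And>i. i \<in> I \<Longrightarrow> integrable M (f i)"
    and int_mult: "\<And>i j. i \<in> I \<Longrightarrow> j \<in> I \<Longrightarrow> integrable M (\<lambda>w. f i w * f j w)"
  shows "variance (\<lambda>w. \<Sum>i\<in>I. f i w) = (\<Sum>i\<in>I. \<Sum>j\<in>I. covariance (f i) (f j))"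
proof -
  have square: "(\<Sum>i\<in>I. g i)\<^sup>2 = (\<Sum>i\<in>I. \<Sum>j\<in>I. g i * g j)" for g :: "'i \<Rightarrow> real"
    by (simp add: power2_eq_square sum_product)
  have int_square: "integrable M (\<lambda>w. (\<Sum>i\<in>I. f i w)\<^sup>2)"
    unfolding square by (intro Bochner_Integration.integrable_sum int_mult)
  have "expectation (\<lambda>w. (\<Sum>i\<in>I. f i w)\<^sup>2)
      = (\<Sum>i\<in>I. \<Sum>j\<in>I. expectation (\<lambda>w. f i w * f j w))"
    unfolding square
    by (simp add: Bochner_Integration.integral_sum Bochner_Integration.integrable_sum int_mult)
  moreover have "(expectation (\<lambda>w. \<Sum>i\<in>I. f i w))\<^sup>2
      = (\<Sum>i\<in>I. \<Sum>j\<in>I. expectation (f i) * expectation (f j))"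
    by (simp add: square int Bochner_Integration.integral_sum)
  moreover have "variance (\<lambda>w. \<Sum>i\<in>I. f i w)
      = expectation (\<lambda>w. (\<Sum>i\<in>I. f i w)\<^sup>2) - (expectation (\<lambda>w. \<Sum>i\<in>I. f i w))\<^sup>2"
    by (intro variance_eq Bochner_Integration.integrable_sum int int_square)
  ultimately show ?thesis
    by (simp add: covariance_eq int int_mult sum_subtractf)
qed

lemma sum_sum_le_sum_diagonal:
  fixes c :: "'a \<Rightarrow> 'a \<Rightarrow> 'b::ordered_comm_monoid_add"
  assumes "finite A" and "\<And>x y. x \<in> A \<Longrightarrow> y \<in> A \<Longrightarrow> x \<noteq> y \<Longrightarrow> c x y \<le> 0"
  shows "(\<Sum>x\<in>A. \<Sum>y\<in>A. c x y) \<le> (\<Sum>x\<in>A. c x x)"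
proof (rule sum_mono)
  fix x assume "x \<in> A"
  then have "(\<Sum>y\<in>A. c x y) = c x x + (\<Sum>y\<in>A - {x}. c x y)"
    by (rule sum.remove[OF \<open>finite A\<close>])
  also have "\<dots> \<le> c x x"
    using assms(2) \<open>x \<in> A\<close> by (intro add_decreasing2 sum_nonpos order_refl) auto
  finally show "(\<Sum>y\<in>A. c x y) \<le> c x x" .
qed

lemma permutes_pair_exists:
  assumes "x \<in> S" "y \<in> S" "x \<noteq> y" "x' \<in> S" "y' \<in> S" "x' \<noteq> y'"
  shows "\<exists>\<sigma>. \<sigma> permutes S \<and> \<sigma> x = x' \<and> \<sigma> y = y'"
proof -
  define y1 where "y1 = Transposition.transpose x x' y"
  have "y1 \<in> S" "y1 \<noteq> x'"
    using assms by (auto simp: y1_def Transposition.transpose_def)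
  then show ?thesis
    using assms
    by (intro exI[of _ "Transposition.transpose y1 y' \<circ> Transposition.transpose x x'"])
      (auto simp: y1_def Transposition.transpose_def intro: permutes_compose permutes_swap_id)
qed

lemma exchangeable_integral_permute:
  fixes g :: "('a \<Rightarrow> real) \<Rightarrow> real"
  assumes "exchangeable M X nu" "\<sigma> permutes X"
    and nu_measurable: "\<And>x. x \<in> X \<Longrightarrow> (\<lambda>w. nu w x) \<in> borel_measurable M"
    and g_measurable: "g \<in> borel_measurable (PiM X (\<lambda>_. borel))"
  shows "(\<integral>w. g (\<lambda>x\<in>X. nu w (\<sigma> x)) \<partial>M) = (\<integral>w. g (\<lambda>x\<in>X. nu w x) \<partial>M)"
proof -
  let ?N = "PiM X (\<lambda>_. borel) :: ('a \<Rightarrow> real) measure"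
  have "(\<lambda>w. \<lambda>x\<in>X. nu w (\<sigma> x)) \<in> measurable M ?N"
    using nu_measurable permutes_in_image[OF \<open>\<sigma> permutes X\<close>] by (intro measurable_restrict) auto
  moreover have "(\<lambda>w. \<lambda>x\<in>X. nu w x) \<in> measurable M ?N"
    using nu_measurable by (intro measurable_restrict) auto
  moreover have "distr M ?N (\<lambda>w. \<lambda>x\<in>X. nu w (\<sigma> x)) = distr M ?N (\<lambda>w. \<lambda>x\<in>X. nu w x)"
    using assms(1,2) unfolding exchangeable_def by blast
  ultimately show ?thesis
    using g_measurable by (metis integral_distr)
qed

locale random_prob_measure_space = prob_space M for M :: "'m measure" +
  fixes X :: "'a set" and nu :: "'m \<Rightarrow> 'a \<Rightarrow> real"
  assumes finite_X: "finite X" and random_prob_measure: "random_prob_measure M X nu"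
begin

lemma measurable_nu: "x \<in> X \<Longrightarrow> (\<lambda>w. nu w x) \<in> borel_measurable M"
  using random_prob_measure unfolding random_prob_measure_def by blast

lemma nu_nonneg: "w \<in> space M \<Longrightarrow> x \<in> X \<Longrightarrow> 0 \<le> nu w x"
  using random_prob_measure unfolding random_prob_measure_def by blast

lemma sum_nu_eq_1: "w \<in> space M \<Longrightarrow> (\<Sum>x\<in>X. nu w x) = 1"
  using random_prob_measure unfolding random_prob_measure_def by blast

lemma nu_le_1:
  assumes "w \<in> space M" "x \<in> X"
  shows "nu w x \<le> 1"
proof -
  have "nu w x \<le> (\<Sum>x\<in>X. nu w x)"
    using assms finite_X by (intro member_le_sum) (auto simp: nu_nonneg)
  then show ?thesis
    using sum_nu_eq_1[OF assms(1)] by simp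
qed

lemma X_nonempty: "X \<noteq> {}"
  using sum_nu_eq_1 not_empty by fastforce

lemma integrable_nu: "x \<in> X \<Longrightarrow> integrable M (\<lambda>w. nu w x)"
  by (rule integrable_const_bound[where B = 1])
    (auto intro!: AE_I2 measurable_nu simp: nu_nonneg nu_le_1)

lemma integrable_nu_mult: "x \<in> X \<Longrightarrow> y \<in> X \<Longrightarrow> integrable M (\<lambda>w. nu w x * nu w y)"
  by (rule integrable_const_bound[where B = 1])
    (auto intro!: AE_I2 borel_measurable_times measurable_nu mult_le_one simp: abs_mult nu_nonneg nu_le_1)

lemma integrable_nu_square: "x \<in> X \<Longrightarrow> integrable M (\<lambda>w. (nu w x)\<^sup>2)"
  using integrable_nu_mult[of x x] by (simp add: power2_eq_square)

lemma integrable_Max_nu: "integrable M (\<lambda>w. Max (nu w ` X))"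
proof (rule integrable_const_bound[where B = 1])
  show "AE w in M. norm (Max (nu w ` X)) \<le> 1"
  proof (rule AE_I2)
    fix w assume "w \<in> space M"
    have "Max (nu w ` X) \<in> nu w ` X"
      using finite_X X_nonempty by (intro Max_in) auto
    then obtain x where "x \<in> X" "Max (nu w ` X) = nu w x"
      by blast
    then show "norm (Max (nu w ` X)) \<le> 1"
      using \<open>w \<in> space M\<close> by (simp add: nu_nonneg nu_le_1)
  qed
  show "(\<lambda>w. Max (nu w ` X)) \<in> borel_measurable M"
    using borel_measurable_Max[OF finite_X, of "\<lambda>x w. nu w x" M] measurable_nu by simp
qed

lemma sum_nu_square_le_Max:
  assumes "w \<in> space M"
  shows "(\<Sum>x\<in>X. (nu w x)\<^sup>2) \<le> Max (nu w ` X)"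
proof -
  have "(\<Sum>x\<in>X. (nu w x)\<^sup>2) \<le> (\<Sum>x\<in>X. nu w x * Max (nu w ` X))"
    using assms finite_X
    by (intro sum_mono) (simp add: power2_eq_square mult_left_mono nu_nonneg)
  also have "\<dots> = Max (nu w ` X)"
    using sum_nu_eq_1[OF assms] by (simp add: sum_distrib_right[symmetric])
  finally show ?thesis .
qed

lemma sum_second_moments_le_expectation_Max:
  "(\<Sum>x\<in>X. expectation (\<lambda>w. (nu w x)\<^sup>2)) \<le> expectation (\<lambda>w. Max (nu w ` X))"
proof -
  have "(\<Sum>x\<in>X. expectation (\<lambda>w. (nu w x)\<^sup>2)) = expectation (\<lambda>w. \<Sum>x\<in>X. (nu w x)\<^sup>2)"
    by (simp add: Bochner_Integration.integral_sum integrable_nu_square)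
  also have "\<dots> \<le> expectation (\<lambda>w. Max (nu w ` X))"
    by (intro integral_mono Bochner_Integration.integrable_sum integrable_nu_square
        integrable_Max_nu sum_nu_square_le_Max)
  finally show ?thesis .
qed

end

locale exchangeable_random_prob_measure = random_prob_measure_space +
  assumes exchangeable: "exchangeable M X nu"
begin

lemma expectation_nu_permute:
  assumes "\<sigma> permutes X" "x \<in> X"
  shows "expectation (\<lambda>w. nu w (\<sigma> x)) = expectation (\<lambda>w. nu w x)"
  using exchangeable_integral_permute[OF exchangeable assms(1) measurable_nu, of "\<lambda>f. f x"] assms
  by simp

lemma expectation_nu_mult_permute:
  assumes "\<sigma> permutes X" "x \<in> X" "y \<in> X"
  shows "expectation (\<lambda>w. nu w (\<sigma> x) * nu w (\<sigma> y)) = expectation (\<lambda>w. nu w x * nu w y)"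
  using exchangeable_integral_permute[OF exchangeable assms(1) measurable_nu, of "\<lambda>f. f x * f y"]
    assms
  by simp

lemma covariance_nu_permute:
  assumes "\<sigma> permutes X" "x \<in> X" "y \<in> X"
  shows "covariance (\<lambda>w. nu w (\<sigma> x)) (\<lambda>w. nu w (\<sigma> y)) = covariance (\<lambda>w. nu w x) (\<lambda>w. nu w y)"
  using assms permutes_in_image[OF assms(1)]
  by (simp add: covariance_eq integrable_nu integrable_nu_mult expectation_nu_permute
      expectation_nu_mult_permute)

lemma covariance_nu_off_diagonal_eq:
  assumes "x \<in> X" "y \<in> X" "x \<noteq> y" "x' \<in> X" "y' \<in> X" "x' \<noteq> y'"
  shows "covariance (\<lambda>w. nu w x') (\<lambda>w. nu w y') = covariance (\<lambda>w. nu w x) (\<lambda>w. nu w y)"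
proof -
  obtain \<sigma> where "\<sigma> permutes X" "\<sigma> x = x'" "\<sigma> y = y'"
    using permutes_pair_exists[OF assms] by blast
  then show ?thesis
    using covariance_nu_permute[of \<sigma> x y] assms by simp
qed

lemma covariance_nu_nonpos:
  assumes "x \<in> X" "y \<in> X" "x \<noteq> y"
  shows "covariance (\<lambda>w. nu w x) (\<lambda>w. nu w y) \<le> 0"
proof -
  define r where "r = covariance (\<lambda>w. nu w x) (\<lambda>w. nu w y)"
  have row_sum: "(\<Sum>y'\<in>X. covariance (\<lambda>w. nu w x') (\<lambda>w. nu w y'))
      = variance (\<lambda>w. nu w x') + real (card X - 1) * r" if "x' \<in> X" for x'
  proof -
    have "(\<Sum>y'\<in>X - {x'}. covariance (\<lambda>w. nu w x') (\<lambda>w. nu w y')) = (\<Sum>y'\<in>X - {x'}. r)"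
      unfolding r_def using that assms by (intro sum.cong refl covariance_nu_off_diagonal_eq) auto
    then show ?thesis
      using sum.remove[OF finite_X that, of "\<lambda>y'. covariance (\<lambda>w. nu w x') (\<lambda>w. nu w y')"]
        that finite_X
      by (simp add: covariance_self)
  qed
  have expectation_sum: "expectation (\<lambda>w. \<Sum>x\<in>X. nu w x) = 1"
    by (simp add: sum_nu_eq_1 prob_space cong: Bochner_Integration.integral_cong)
  have "0 = variance (\<lambda>w. \<Sum>x\<in>X. nu w x)"
    by (simp add: expectation_sum sum_nu_eq_1 prob_space cong: Bochner_Integration.integral_cong)
  also have "\<dots> = (\<Sum>x'\<in>X. \<Sum>y'\<in>X. covariance (\<lambda>w. nu w x') (\<lambda>w. nu w y'))"
    by (intro variance_sum finite_X integrable_nu integrable_nu_mult)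
  also have "\<dots> = (\<Sum>x'\<in>X. variance (\<lambda>w. nu w x')) + real (card X * (card X - 1)) * r"
    by (simp add: row_sum sum.distrib)
  finally have "real (card X * (card X - 1)) * r \<le> 0"
    using sum_nonneg[of X "\<lambda>x'. variance (\<lambda>w. nu w x')", OF variance_positive] by linarith
  moreover have "card X \<ge> 2"
    using card_mono[OF finite_X, of "{x, y}"] assms by simp
  ultimately show ?thesis
    by (simp add: r_def mult_le_0_iff)
qed

lemma sum_second_moments_subset:
  assumes "A \<subseteq> X"
  shows "(\<Sum>x\<in>A. expectation (\<lambda>w. (nu w x)\<^sup>2))
    = real (card A) / real (card X) * (\<Sum>x\<in>X. expectation (\<lambda>w. (nu w x)\<^sup>2))"
proof -
  obtain z where "z \<in> X"
    using X_nonempty by blast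
  define m where "m = expectation (\<lambda>w. (nu w z)\<^sup>2)"
  have "expectation (\<lambda>w. (nu w x)\<^sup>2) = m" if "x \<in> X" for x
    using expectation_nu_mult_permute[OF permutes_swap_id[OF that \<open>z \<in> X\<close>] that that]
    by (simp add: m_def power2_eq_square)
  then show ?thesis
    using assms finite_X X_nonempty by (simp add: subset_iff card_gt_0_iff)
qed

end

theorem lemma6p3:
  fixes M :: "'m measure" and X A :: "'a set" and nu :: "'m \<Rightarrow> 'a \<Rightarrow> real"
  assumes "prob_space M"
    and "finite X" and "X \<noteq> {}"
    and "random_prob_measure M X nu"
    and "exchangeable M X nu"
    and "A \<subseteq> X"
  shows "prob_space.variance M (\<lambda>w. \<Sum>x\<in>A. nu w x)
           \<le> real (card A) / real (card X) * prob_space.expectation M (\<lambda>w. Max ((nu w) ` X))"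
proof -
  interpret exchangeable_random_prob_measure M X nu
    using assms by (simp add: exchangeable_random_prob_measure_def random_prob_measure_space_def
        exchangeable_random_prob_measure_axioms_def random_prob_measure_space_axioms_def)
  have "finite A"
    using \<open>A \<subseteq> X\<close> finite_X finite_subset by blast
  have "variance (\<lambda>w. \<Sum>x\<in>A. nu w x) = (\<Sum>x\<in>A. \<Sum>y\<in>A. covariance (\<lambda>w. nu w x) (\<lambda>w. nu w y))"
    using \<open>A \<subseteq> X\<close> by (intro variance_sum \<open>finite A\<close> integrable_nu integrable_nu_mult) auto
  also have "\<dots> \<le> (\<Sum>x\<in>A. variance (\<lambda>w. nu w x))"
    using \<open>A \<subseteq> X\<close> covariance_nu_nonpos
    by (subst covariance_self[symmetric]) (intro sum_sum_le_sum_diagonal \<open>finite A\<close>, auto)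
  also have "\<dots> \<le> (\<Sum>x\<in>A. expectation (\<lambda>w. (nu w x)\<^sup>2))"
    using \<open>A \<subseteq> X\<close>
    by (intro sum_mono variance_le_second_moment integrable_nu integrable_nu_square) auto
  also have "\<dots> = real (card A) / real (card X) * (\<Sum>x\<in>X. expectation (\<lambda>w. (nu w x)\<^sup>2))"
    using \<open>A \<subseteq> X\<close> by (rule sum_second_moments_subset)
  also have "\<dots> \<le> real (card A) / real (card X) * expectation (\<lambda>w. Max (nu w ` X))"
    by (intro mult_left_mono sum_second_moments_le_expectation_Max) simp
  finally show ?thesis .
qed

end
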